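(* Let $T>0$, let $u:\mathbb{R}\times[0,T]\to\mathbb{R}$ be a bounded continuous function solving the Hunter–Saxton equation in the weak sense, and let $\{x_\alpha\}_{\alpha\in A}$ be a family of characteristics associated to $u$ on $[0,T]$ such that $y(t):=\sup_{\alpha}x_\alpha(t)$ is finite for $t\in[0,T]$. Then $y$ is also a characteristic associated to $u$ on $[0,T]$. The same holds for $\inf_\alpha x_\alpha(t)$ (when finite).
   Context: The Hunter–Saxton equation is $\partial_t u+\partial_x\big[\tfrac12 u^2\big]=\tfrac12\int_{-\infty}^x w^2(y,t)\,dy$, $w=\partial_x u$. A weak solution on $[0,T]$ is a continuous function $u$ such that for each $t$, $u(\cdot,t)$ is absolutely continuous on $\mathbb{R}$ with $\partial_x u=w\in L^\infty([0,T];L^2(\mathbb{R}))$, the map $t\mapsto u(\cdot,t)\in L^2_{loc}(\mathbb{R})$ is absolutely continuous, and the equation holds in the sense of distributions. A characteristic associated to $u$ on $[0,T]$ is a Lipschitz continuous ($C^1$) function $x:[0,T]\to\mathbb{R}$ with $\dot x(t)=u(x(t),t)$ for a.e. $t\in[0,T]$. *)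

theory Defs
  imports "HOL-Analysis.Analysis"
begin

text \<open>Convention: functions of space and time are written u x t.\<close>

text \<open>Generalised absolute continuity on a set S of the line, w.r.t. a "distance of increments"
 d s s' (e.g. d s s' = |f s' - f s|, or an L2 distance of f s, f s').\<close>
definition ac_gen :: "real set \<Rightarrow> (real \<Rightarrow> real \<Rightarrow> real) \<Rightarrow> bool" where
  "ac_gen S d \<longleftrightarrow> (\<forall>\<epsilon>>0. \<exists>\<delta>>0. \<forall>(n::nat) (a::nat \<Rightarrow> real) (b::nat \<Rightarrow> real).
      (\<forall>i<n. a i \<le> b i \<and> a i \<in> S \<and> b i \<in> S) \<and>
      (\<forall>i<n. \<forall>j<n. i \<noteq> j \<longrightarrow> {a i<..<b i} \<inter> {a j<..<b j} = {}) \<and>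
      (\<Sum>i<n. b i - a i) < \<delta>
      \<longrightarrow> (\<Sum>i<n. d (a i) (b i)) < \<epsilon>)"

definition abs_cont_real :: "(real \<Rightarrow> real) \<Rightarrow> bool" where
  "abs_cont_real f \<longleftrightarrow> (\<forall>a b. ac_gen {a..b} (\<lambda>s s'. \<bar>f s' - f s\<bar>))"

text \<open>Iterated partial derivatives: True = derivative in x, False = derivative in t.\<close>
fun pderivs :: "bool list \<Rightarrow> (real \<Rightarrow> real \<Rightarrow> real) \<Rightarrow> real \<Rightarrow> real \<Rightarrow> real" where
  "pderivs [] f = f"
| "pderivs (d # ds) f =
     (let g = pderivs ds f in
      if d then (\<lambda>x t. deriv (\<lambda>y. g y t) x) else (\<lambda>x t. deriv (\<lambda>s. g x s) t))"

definition smooth2 :: "(real \<Rightarrow> real \<Rightarrow> real) \<Rightarrow> bool" where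
  "smooth2 \<phi> \<longleftrightarrow> (\<forall>ds. continuous_on UNIV (\<lambda>(x,t). pderivs ds \<phi> x t) \<and>
      (\<forall>x t. (\<lambda>y. pderivs ds \<phi> y t) differentiable (at x) \<and>
             (\<lambda>s. pderivs ds \<phi> x s) differentiable (at t)))"

definition test_fun :: "real \<Rightarrow> (real \<Rightarrow> real \<Rightarrow> real) \<Rightarrow> bool" where
  "test_fun T \<phi> \<longleftrightarrow> smooth2 \<phi> \<and>
     (\<exists>K. compact K \<and> K \<subseteq> UNIV \<times> {0<..<T} \<and> (\<forall>x t. (x,t) \<notin> K \<longrightarrow> \<phi> x t = 0))"

definition HS_weak_solution :: "real \<Rightarrow> (real \<Rightarrow> real \<Rightarrow> real) \<Rightarrow> bool" where
  "HS_weak_solution T u \<longleftrightarrow>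
     continuous_on (UNIV \<times> {0..T}) (\<lambda>(x,t). u x t) \<and>
     (\<exists>w :: real \<Rightarrow> real \<Rightarrow> real.
        \<comment> \<open>u(.,t) absolutely continuous with derivative w(.,t)\<close>
        (\<forall>t\<in>{0..T}. abs_cont_real (\<lambda>x. u x t) \<and>
            (AE x in lborel. ((\<lambda>y. u y t) has_real_derivative w x t) (at x))) \<and>
        \<comment> \<open>w in L-infinity([0,T]; L2(R))\<close>
        (\<lambda>(x,t). w x t) \<in> borel_measurable lborel \<and>
        (\<forall>t\<in>{0..T}. integrable lborel (\<lambda>x. (w x t)\<^sup>2)) \<and>
        (\<exists>C. AE t in lborel. t \<in> {0..T} \<longrightarrow> (\<integral>x. (w x t)\<^sup>2 \<partial>lborel) \<le> C) \<and>
        \<comment> \<open>t \<mapsto> u(.,t) in L2_loc absolutely continuous\<close>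
        (\<forall>R. ac_gen {0..T} (\<lambda>s s'. sqrt (LINT x:{-R..R}|lborel. (u x s' - u x s)\<^sup>2))) \<and>
        \<comment> \<open>the equation in the sense of distributions on R x (0,T)\<close>
        (\<forall>\<phi>. test_fun T \<phi> \<longrightarrow>
           (\<integral>p. (case p of (x,t) \<Rightarrow>
               u x t * pderivs [False] \<phi> x t
             + (1/2) * (u x t)\<^sup>2 * pderivs [True] \<phi> x t
             + (1/2) * (LINT y:{..x}|lborel. (w y t)\<^sup>2) * \<phi> x t) \<partial>lborel) = 0))"

definition characteristic :: "real \<Rightarrow> (real \<Rightarrow> real \<Rightarrow> real) \<Rightarrow> (real \<Rightarrow> real) \<Rightarrow> bool" where
  "characteristic T u X \<longleftrightarrow>
     (\<exists>L. L-lipschitz_on {0..T} X) \<and>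
     (AE t in lborel. t \<in> {0..T} \<longrightarrow> (X has_real_derivative u (X t) t) (at t))"

end

theory Submission
  imports Defs
begin

(*
  The supremum Y of characteristics whose speeds are bounded by M is M-Lipschitz.
  At an interior time t0 it is even differentiable with derivative u (Y t0) t0:
  on a short interval [s, t] around t0, a characteristic that is almost maximal at
  s or at t stays close to Y t0 on all of [s, t], so by continuity of u its speed,
  and hence its increment, is close to u (Y t0) t0 * (t - s); an almost maximal one
  at t bounds Y t - Y s from above, one at s from below. Increments of a
  characteristic are read off its a.e. speed by a mean value inequality for
  Lipschitz functions whose derivative may fail to exist on a null set. The
  infimum is the reflected supremum under x \<mapsto> -x.
*)

lemma lipschitz_rising_point_outside_negligible:
  fixes h :: "real \<Rightarrow> real"
  assumes ab: "a \<le> b" and lip: "L-lipschitz_on {a..b} h" and N: "negligible N"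
    and rise: "h a < h b"
  shows "\<exists>t\<in>{a..<b}. t \<notin> N \<and> (\<forall>D. (h has_real_derivative D) (at t) \<longrightarrow> 0 \<le> D)"
proof -
  have cont: "continuous_on {a..b} h"
    using lip lipschitz_on_continuous_on by blast
  have "negligible (h ` (N \<inter> {a..b}))"
  proof (rule negligible_locally_Lipschitz_image)
    show "negligible (N \<inter> {a..b})"
      using N negligible_subset by blast
    fix x assume x: "x \<in> N \<inter> {a..b}"
    show "\<exists>U B. open U \<and> x \<in> U \<and> (\<forall>y\<in>N \<inter> {a..b} \<inter> U. norm (h y - h x) \<le> B * norm (y - x))"
      using lipschitz_onD[OF lip] x by (intro exI[of _ UNIV] exI[of _ L]) (auto simp: dist_real_def)
  qed auto
  \<comment> \<open>Lipschitz maps preserve null sets, so some level c strictly between h a and h b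
     is not attained on N; the last time h is at most c is where h crosses c from below.\<close>
  moreover have "\<not> negligible {h a<..<h b}"
    using negligible_interval(2)[of "h a" "h b"] rise by simp
  ultimately obtain c where c: "h a < c" "c < h b" "c \<notin> h ` (N \<inter> {a..b})"
    using negligible_subset by (metis greaterThanLessThan_iff subsetI)
  define S where "S = {a..b} \<inter> h -` {..c}"
  have "closed S"
    unfolding S_def by (rule continuous_closed_preimage[OF cont]) auto
  moreover have "a \<in> S" and bdd: "bdd_above S"
    using c ab by (auto simp: S_def)
  ultimately have "Sup S \<in> S"
    using closed_contains_Sup by blast
  define t where "t = Sup S"
  have tS: "t \<in> S"
    using \<open>Sup S \<in> S\<close> by (simp add: t_def)
  have upper: "x \<le> t" if "x \<in> S" for x
    unfolding t_def using that bdd by (rule cSup_upper)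
  have "t \<noteq> b"
    using tS c by (auto simp: S_def)
  with tS have tb: "t < b"
    by (auto simp: S_def)
  have ht: "h t = c"
  proof -
    have "continuous_on {t..b} h"
      using cont tS by (auto simp: S_def intro: continuous_on_subset)
    then obtain x where "t \<le> x" "x \<le> b" "h x = c"
      using IVT'[of h t c b] tS c tb by (auto simp: S_def)
    with upper[of x] tS show ?thesis
      by (auto simp: S_def)
  qed
  have "0 \<le> D" if D: "(h has_real_derivative D) (at t)" for D
  proof (rule ccontr)
    assume "\<not> 0 \<le> D"
    then obtain d where d: "d > 0" "\<And>k. k > 0 \<Longrightarrow> k < d \<Longrightarrow> h (t + k) < h t"
      using DERIV_neg_dec_right[OF D] by force
    define k where "k = min (d/2) (b - t)"
    have k: "0 < k" "k < d" "t + k \<le> b"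
      using d tb by (auto simp: k_def)
    then have "h (t + k) \<le> c"
      using d(2) ht by fastforce
    with k tS have "t + k \<in> S"
      by (auto simp: S_def)
    with upper[of "t + k"] k show False
      by simp
  qed
  moreover have "t \<notin> N"
    using ht c tS by (auto simp: S_def)
  ultimately show ?thesis
    using tS tb by (auto simp: S_def)
qed

lemma lipschitz_increment_le_if_ae_deriv_le:
  fixes g g' :: "real \<Rightarrow> real"
  assumes ab: "a \<le> b" and lip: "L-lipschitz_on {a..b} g" and N: "negligible N"
    and deriv: "\<And>t. t \<in> {a..b} - N \<Longrightarrow> (g has_real_derivative g' t) (at t)"
    and bound: "\<And>t. t \<in> {a..b} - N \<Longrightarrow> g' t \<le> B"
  shows "g b - g a \<le> B * (b - a)"
proof (rule field_le_epsilon)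
  fix e :: real assume e: "0 < e"
  \<comment> \<open>with the slope raised strictly above B, h cannot rise at a point outside N\<close>
  define h where "h t = g t - (B + e / (b - a + 1)) * t" for t
  have "h b \<le> h a"
  proof (rule ccontr)
    have "(L + \<bar>B + e / (b - a + 1)\<bar> * 1)-lipschitz_on {a..b} h"
      unfolding h_def by (intro lipschitz_intros lip)
    moreover assume "\<not> h b \<le> h a"
    ultimately obtain t where "t \<in> {a..<b}" "t \<notin> N"
        and nonneg: "\<forall>D. (h has_real_derivative D) (at t) \<longrightarrow> 0 \<le> D"
      using lipschitz_rising_point_outside_negligible[OF ab _ N] by (meson not_le)
    then have t: "t \<in> {a..b} - N"
      by simp
    have "(h has_real_derivative g' t - (B + e / (b - a + 1))) (at t)"
      unfolding h_def using deriv[OF t] by (auto intro!: derivative_eq_intros)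
    with nonneg have "0 \<le> g' t - (B + e / (b - a + 1))"
      by blast
    moreover have "0 < e / (b - a + 1)"
      using e ab by simp
    ultimately show False
      using bound[OF t] by linarith
  qed
  then have "g b - g a \<le> (B + e / (b - a + 1)) * (b - a)"
    unfolding h_def right_diff_distrib by linarith
  also have "\<dots> = B * (b - a) + e * ((b - a) / (b - a + 1))"
    by (simp add: algebra_simps)
  also have "\<dots> \<le> B * (b - a) + e"
    using e ab by (intro add_left_mono mult_left_le) auto
  finally show "g b - g a \<le> B * (b - a) + e" .
qed

lemma characteristic_increment_bounds:
  assumes X: "characteristic T u X" and st: "0 \<le> s" "s \<le> t" "t \<le> T"
    and speed: "\<And>\<tau>. \<tau> \<in> {s..t} \<Longrightarrow> lo \<le> u (X \<tau>) \<tau> \<and> u (X \<tau>) \<tau> \<le> hi"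
  shows "lo * (t - s) \<le> X t - X s \<and> X t - X s \<le> hi * (t - s)"
proof -
  obtain L where "L-lipschitz_on {0..T} X"
    and "AE \<tau> in lborel. \<tau> \<in> {0..T} \<longrightarrow> (X has_real_derivative u (X \<tau>) \<tau>) (at \<tau>)"
    using X unfolding characteristic_def by blast
  then have lip: "L-lipschitz_on {s..t} X"
    and "AE \<tau> in lebesgue. \<tau> \<in> {0..T} \<longrightarrow> (X has_real_derivative u (X \<tau>) \<tau>) (at \<tau>)"
    using st by (auto intro: lipschitz_on_subset AE_completion)
  then obtain N where N: "negligible N"
    and "{\<tau>. \<not> (\<tau> \<in> {0..T} \<longrightarrow> (X has_real_derivative u (X \<tau>) \<tau>) (at \<tau>))} \<subseteq> N"
    unfolding eventually_ae_filter_negligible by blast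
  moreover have "{s..t} \<subseteq> {0..T}"
    using st by auto
  ultimately have deriv: "\<And>\<tau>. \<tau> \<in> {s..t} - N \<Longrightarrow> (X has_real_derivative u (X \<tau>) \<tau>) (at \<tau>)"
    by blast
  have "X t - X s \<le> hi * (t - s)"
    using lipschitz_increment_le_if_ae_deriv_le[OF st(2) lip N deriv] speed by auto
  moreover have "- X t - - X s \<le> - lo * (t - s)"
  proof (rule lipschitz_increment_le_if_ae_deriv_le[OF st(2) lipschitz_on_minus[OF lip] N])
    fix \<tau> assume "\<tau> \<in> {s..t} - N"
    then show "((\<lambda>\<tau>. - X \<tau>) has_real_derivative - u (X \<tau>) \<tau>) (at \<tau>)" "- u (X \<tau>) \<tau> \<le> - lo"
      using deriv speed by (auto intro!: derivative_eq_intros)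
  qed
  ultimately show ?thesis
    by simp
qed

lemma DERIV_straddle_increments:
  fixes f :: "real \<Rightarrow> real"
  assumes "\<And>e. 0 < e \<Longrightarrow> \<exists>d>0. \<forall>s t. s \<le> x \<longrightarrow> x \<le> t \<longrightarrow> s < t \<longrightarrow> t - s < d \<longrightarrow>
             \<bar>f t - f s - v * (t - s)\<bar> \<le> e * (t - s)"
  shows "(f has_real_derivative v) (at x)"
  unfolding DERIV_def LIM_eq
proof (intro allI impI)
  fix r :: real assume "0 < r"
  then obtain d where d: "0 < d" and incr: "\<And>s t. s \<le> x \<Longrightarrow> x \<le> t \<Longrightarrow> s < t \<Longrightarrow> t - s < d \<Longrightarrow>
      \<bar>f t - f s - v * (t - s)\<bar> \<le> r / 2 * (t - s)"
    using assms[of "r / 2"] by auto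
  have "\<bar>(f (x + h) - f x) / h - v\<bar> < r" if h: "h \<noteq> 0" "\<bar>h\<bar> < d" for h
  proof -
    have "\<bar>f (x + h) - f x - v * h\<bar> \<le> r / 2 * \<bar>h\<bar>"
    proof (cases "0 < h")
      case True
      then show ?thesis using incr[of x "x + h"] h by simp
    next
      case False
      then show ?thesis using incr[of "x + h" x] h by (simp add: abs_minus_commute algebra_simps)
    qed
    also have "\<dots> < r * \<bar>h\<bar>"
      using \<open>0 < r\<close> h by simp
    finally have "\<bar>(f (x + h) - f x - v * h) / h\<bar> < r"
      using h by (simp add: abs_divide pos_divide_less_eq)
    then show ?thesis
      using h by (simp add: diff_divide_distrib)
  qed
  then show "\<exists>d>0. \<forall>h. h \<noteq> 0 \<and> norm (h - 0) < d \<longrightarrow> norm ((f (x + h) - f x) / h - v) < r"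
    using d by auto
qed

lemma lipschitz_on_SUP:
  fixes f :: "'i \<Rightarrow> 'a::metric_space \<Rightarrow> real"
  assumes A: "A \<noteq> {}" and lip: "\<And>i. i \<in> A \<Longrightarrow> L-lipschitz_on S (f i)"
    and bdd: "\<And>x. x \<in> S \<Longrightarrow> bdd_above ((\<lambda>i. f i x) ` A)"
  shows "L-lipschitz_on S (\<lambda>x. SUP i\<in>A. f i x)"
proof -
  have "L \<ge> 0"
    using A lip lipschitz_on_nonneg by blast
  have le: "(SUP i\<in>A. f i x) \<le> (SUP i\<in>A. f i y) + L * dist x y" if "x \<in> S" "y \<in> S" for x y
  proof (rule cSUP_least[OF A])
    fix i assume i: "i \<in> A"
    have "f i x \<le> f i y + L * dist x y"
      using lipschitz_onD[OF lip[OF i] that] by (simp add: dist_real_def abs_le_iff)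
    also have "f i y \<le> (SUP i\<in>A. f i y)"
      using cSUP_upper[OF i bdd[OF that(2)]] .
    finally show "f i x \<le> (SUP i\<in>A. f i y) + L * dist x y"
      by simp
  qed
  show ?thesis
  proof (rule lipschitz_onI[OF _ \<open>L \<ge> 0\<close>])
    fix x y assume "x \<in> S" "y \<in> S"
    then show "dist (SUP i\<in>A. f i x) (SUP i\<in>A. f i y) \<le> L * dist x y"
      using le[of x y] le[of y x] by (simp add: dist_real_def dist_commute abs_le_iff)
  qed
qed

lemma continuous_on_UNIV_Times_pointwiseD:
  fixes u :: "real \<Rightarrow> real \<Rightarrow> real"
  assumes u: "continuous_on (UNIV \<times> S) (\<lambda>(x, t). u x t)" and "b \<in> S" and "0 < e"
  obtains d where "0 < d"
    and "\<And>x t. t \<in> S \<Longrightarrow> \<bar>x - a\<bar> < d \<Longrightarrow> \<bar>t - b\<bar> < d \<Longrightarrow> \<bar>u x t - u a b\<bar> < e"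
proof -
  obtain d where d: "0 < d" and near: "\<And>p. p \<in> UNIV \<times> S \<Longrightarrow> dist p (a, b) < d \<Longrightarrow>
      dist ((\<lambda>(x, t). u x t) p) (u a b) < e"
    using u[unfolded continuous_on_iff] \<open>b \<in> S\<close> \<open>0 < e\<close> by fastforce
  show ?thesis
  proof
    show "0 < d / sqrt 2"
      using d by simp
    fix x t assume "t \<in> S" "\<bar>x - a\<bar> < d / sqrt 2" "\<bar>t - b\<bar> < d / sqrt 2"
    then have "dist (x, t) (a, b) < d"
      unfolding dist_Pair_Pair dist_real_def by (intro real_sqrt_sum_squares_less) auto
    with near[of "(x, t)"] \<open>t \<in> S\<close> show "\<bar>u x t - u a b\<bar> < e"
      by (simp add: dist_real_def)
  qed
qed

lemma characteristic_reflect: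
  assumes "characteristic T u X"
  shows "characteristic T (\<lambda>x t. - u (- x) t) (\<lambda>t. - X t)"
proof -
  obtain L where "L-lipschitz_on {0..T} X"
    and ae: "AE t in lborel. t \<in> {0..T} \<longrightarrow> (X has_real_derivative u (X t) t) (at t)"
    using assms unfolding characteristic_def by blast
  moreover have "AE t in lborel. t \<in> {0..T} \<longrightarrow> ((\<lambda>t. - X t) has_real_derivative - u (X t) t) (at t)"
    using ae by eventually_elim (auto intro!: derivative_eq_intros)
  ultimately show ?thesis
    unfolding characteristic_def by auto
qed

locale characteristic_family =
  fixes T :: real and u :: "real \<Rightarrow> real \<Rightarrow> real" and M :: real
    and A :: "'i set" and X :: "'i \<Rightarrow> real \<Rightarrow> real"
  assumes T_nonneg: "0 \<le> T"
    and u_continuous: "continuous_on (UNIV \<times> {0..T}) (\<lambda>(x, t). u x t)"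
    and u_bounded: "\<And>x t. t \<in> {0..T} \<Longrightarrow> \<bar>u x t\<bar> \<le> M"
    and nonempty: "A \<noteq> {}"
    and characteristic: "\<And>i. i \<in> A \<Longrightarrow> characteristic T u (X i)"
    and bdd_above: "\<And>t. t \<in> {0..T} \<Longrightarrow> bdd_above ((\<lambda>i. X i t) ` A)"
begin

definition envelope :: "real \<Rightarrow> real"
  where "envelope t = (SUP i\<in>A. X i t)"

lemma M_nonneg: "0 \<le> M"
  using u_bounded[of 0 0] T_nonneg by force

lemma lipschitz_member: "i \<in> A \<Longrightarrow> M-lipschitz_on {0..T} (X i)"
proof (rule lipschitz_on_leI[OF _ M_nonneg])
  fix s t assume "i \<in> A" "s \<in> {0..T}" "t \<in> {0..T}" "s \<le> t"
  moreover have "- M \<le> u (X i \<tau>) \<tau> \<and> u (X i \<tau>) \<tau> \<le> M" if "\<tau> \<in> {0..T}" for \<tau>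
    using u_bounded[OF that, of "X i \<tau>"] by (simp add: abs_le_iff)
  ultimately show "dist (X i s) (X i t) \<le> M * dist s t"
    using characteristic_increment_bounds[OF characteristic, of i s t "- M" M]
    by (auto simp: dist_real_def abs_le_iff)
qed

lemma member_le_envelope:
  assumes "i \<in> A" "t \<in> {0..T}"
  shows "X i t \<le> envelope t"
  unfolding envelope_def using assms(1) bdd_above[OF assms(2)] by (rule cSUP_upper)

lemma lipschitz_envelope: "M-lipschitz_on {0..T} envelope"
  unfolding envelope_def[abs_def] by (rule lipschitz_on_SUP[OF nonempty lipschitz_member bdd_above])

lemma near_maximal_member:
  assumes "t \<in> {0..T}" "0 < d"
  obtains i where "i \<in> A" "envelope t - X i t < d"
  using less_cSUP_iff[OF nonempty bdd_above[OF assms(1)], of "envelope t - d"] assms(2)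
  unfolding envelope_def by auto

lemma near_maximal_member_increment:
  assumes i: "i \<in> A" and st: "0 \<le> s" "t \<le> T" and t0: "t0 \<in> {s..t}" and r: "r \<in> {s..t}"
    and near: "envelope r - X i r \<le> e * (t - s)" and e: "0 < e"
    and u_near: "\<And>x \<tau>. \<tau> \<in> {0..T} \<Longrightarrow> \<bar>x - envelope t0\<bar> < \<eta> \<Longrightarrow> \<bar>\<tau> - t0\<bar> < \<eta> \<Longrightarrow>
        \<bar>u x \<tau> - u (envelope t0) t0\<bar> < e"
    and small: "(2 * M + e + 1) * (t - s) < \<eta>"
  shows "\<bar>X i t - X i s - u (envelope t0) t0 * (t - s)\<bar> \<le> e * (t - s)"
proof -
  define v where "v = u (envelope t0) t0"
  have sub: "{s..t} \<subseteq> {0..T}"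
    using st by auto
  have osc: "\<bar>f x - f y\<bar> \<le> M * (t - s)"
    if "M-lipschitz_on {0..T} f" "x \<in> {s..t}" "y \<in> {s..t}" for f x y
  proof -
    have "\<bar>f x - f y\<bar> \<le> M * \<bar>x - y\<bar>"
      using lipschitz_onD[OF that(1)] that(2,3) sub by (force simp: dist_real_def)
    also have "\<dots> \<le> M * (t - s)"
      using that(2,3) M_nonneg by (intro mult_left_mono) auto
    finally show ?thesis .
  qed
  have "v - e \<le> u (X i \<tau>) \<tau> \<and> u (X i \<tau>) \<tau> \<le> v + e" if \<tau>: "\<tau> \<in> {s..t}" for \<tau>
  proof -
    have "X i \<tau> \<le> envelope t0 + M * (t - s)"
      using member_le_envelope[OF i] osc[OF lipschitz_envelope \<tau> t0] \<tau> sub by fastforce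
    moreover have "envelope t0 - (2 * M + e) * (t - s) \<le> X i \<tau>"
      using osc[OF lipschitz_envelope r t0] osc[OF lipschitz_member[OF i] r \<tau>] near
      by (simp add: algebra_simps abs_le_iff)
    moreover have "\<bar>\<tau> - t0\<bar> \<le> t - s" "0 \<le> M * (t - s)" "0 \<le> e * (t - s)"
      using M_nonneg e \<tau> t0 by auto
    moreover have "(2 * M + e + 1) * (t - s) = 2 * (M * (t - s)) + e * (t - s) + (t - s)"
      by (simp add: algebra_simps)
    ultimately have "\<bar>X i \<tau> - envelope t0\<bar> < \<eta>" "\<bar>\<tau> - t0\<bar> < \<eta>"
      using small by (simp_all only: left_diff_distrib distrib_right abs_less_iff) linarith+
    with \<tau> sub have "\<bar>u (X i \<tau>) \<tau> - v\<bar> < e"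
      unfolding v_def by (intro u_near) auto
    then show ?thesis
      by (simp add: abs_less_iff)
  qed
  then show ?thesis
    using characteristic_increment_bounds[OF characteristic[OF i] st(1) _ st(2), of "v - e" "v + e"] t0
    unfolding v_def by (auto simp: abs_le_iff algebra_simps)
qed

lemma envelope_has_derivative:
  assumes t0: "t0 \<in> {0<..<T}"
  shows "(envelope has_real_derivative u (envelope t0) t0) (at t0)"
proof (rule DERIV_straddle_increments)
  fix e :: real assume "0 < e"
  then have e: "0 < e / 2"
    by simp
  define v where "v = u (envelope t0) t0"
  have "t0 \<in> {0..T}"
    using t0 by simp
  then obtain \<eta> where "0 < \<eta>" and u_near: "\<And>x \<tau>. \<tau> \<in> {0..T} \<Longrightarrow> \<bar>x - envelope t0\<bar> < \<eta> \<Longrightarrow>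
      \<bar>\<tau> - t0\<bar> < \<eta> \<Longrightarrow> \<bar>u x \<tau> - v\<bar> < e / 2"
    unfolding v_def using continuous_on_UNIV_Times_pointwiseD[OF u_continuous _ e] by blast
  define d where "d = min (min t0 (T - t0)) (\<eta> / (2 * M + e / 2 + 1))"
  have "0 < d"
    using t0 \<open>0 < \<eta>\<close> M_nonneg e by (simp add: d_def)
  moreover have "\<bar>envelope t - envelope s - v * (t - s)\<bar> \<le> e * (t - s)"
    if "s \<le> t0" "t0 \<le> t" "s < t" "t - s < d" for s t
  proof -
    have st: "0 \<le> s" "t \<le> T" "s \<in> {0..T}" "t \<in> {0..T}" "t0 \<in> {s..t}"
      using that t0 by (auto simp: d_def)
    have "(2 * M + e / 2 + 1) * (t - s) < \<eta>"
      using that M_nonneg e by (simp add: d_def pos_less_divide_eq mult.commute)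
    note increment = near_maximal_member_increment[OF _ st(1,2,5) _ _ e u_near[unfolded v_def] this]
    have "0 < e / 2 * (t - s)"
      using e that by simp
    obtain i where i: "i \<in> A" "envelope t - X i t < e / 2 * (t - s)"
      by (rule near_maximal_member[OF st(4) \<open>0 < e / 2 * (t - s)\<close>])
    obtain j where j: "j \<in> A" "envelope s - X j s < e / 2 * (t - s)"
      by (rule near_maximal_member[OF st(3) \<open>0 < e / 2 * (t - s)\<close>])
    have "\<bar>X i t - X i s - v * (t - s)\<bar> \<le> e / 2 * (t - s)"
      using increment[OF i(1) _ less_imp_le[OF i(2)]] st unfolding v_def by simp
    moreover have "\<bar>X j t - X j s - v * (t - s)\<bar> \<le> e / 2 * (t - s)"
      using increment[OF j(1) _ less_imp_le[OF j(2)]] st unfolding v_def by simp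
    moreover have "X i s \<le> envelope s" "X j t \<le> envelope t"
      using member_le_envelope i(1) j(1) st by auto
    ultimately show ?thesis
      using i(2) j(2) unfolding abs_le_iff by linarith
  qed
  ultimately show "\<exists>d>0. \<forall>s t. s \<le> t0 \<longrightarrow> t0 \<le> t \<longrightarrow> s < t \<longrightarrow> t - s < d \<longrightarrow>
      \<bar>envelope t - envelope s - u (envelope t0) t0 * (t - s)\<bar> \<le> e * (t - s)"
    unfolding v_def by blast
qed

theorem characteristic_SUP: "characteristic T u (\<lambda>t. SUP i\<in>A. X i t)"
proof -
  have "AE t in lborel. t \<in> {0..T} \<longrightarrow> (envelope has_real_derivative u (envelope t) t) (at t)"
    using AE_lborel_singleton[of 0] AE_lborel_singleton[of T]
    by eventually_elim (auto intro: envelope_has_derivative)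
  then show ?thesis
    using lipschitz_envelope unfolding characteristic_def envelope_def[abs_def] by blast
qed

end

lemma characteristic_INF:
  assumes T: "0 \<le> T" and u: "continuous_on (UNIV \<times> {0..T}) (\<lambda>(x, t). u x t)"
    and M: "\<And>x t. t \<in> {0..T} \<Longrightarrow> \<bar>u x t\<bar> \<le> M"
    and A: "A \<noteq> {}" and X: "\<And>i. i \<in> A \<Longrightarrow> characteristic T u (X i)"
    and bdd: "\<And>t. t \<in> {0..T} \<Longrightarrow> bdd_below ((\<lambda>i. X i t) ` A)"
  shows "characteristic T u (\<lambda>t. INF i\<in>A. X i t)"
proof -
  have "continuous_on (UNIV \<times> {0..T}) (\<lambda>p. (\<lambda>(x, t). u x t) (- fst p, snd p))"
    by (rule continuous_on_compose2[OF u]) (auto intro!: continuous_intros)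
  then have "continuous_on (UNIV \<times> {0..T}) (\<lambda>(x, t). - u (- x) t)"
    by (auto simp: case_prod_beta intro: continuous_on_minus)
  moreover have "bdd_above ((\<lambda>i. - X i t) ` A)" if "t \<in> {0..T}" for t
    using bdd_above_uminus[of "(\<lambda>i. X i t) ` A"] bdd[OF that] by (simp add: image_image)
  ultimately interpret reflected: characteristic_family T "\<lambda>x t. - u (- x) t" M A "\<lambda>i t. - X i t"
    using T M A X by unfold_locales (auto simp: characteristic_reflect)
  have "characteristic T (\<lambda>x t. - u (- x) t) (\<lambda>t. - (INF i\<in>A. X i t))"
    using reflected.characteristic_SUP by (simp add: Inf_real_def image_image)
  then show ?thesis
    using characteristic_reflect by fastforce
qed

theorem lemma3p3:
  fixes T :: real and u :: "real \<Rightarrow> real \<Rightarrow> real"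
    and A :: "'a set" and X :: "'a \<Rightarrow> real \<Rightarrow> real"
  assumes "T > 0"
    and "bounded ((\<lambda>(x,t). u x t) ` (UNIV \<times> {0..T}))"
    and "HS_weak_solution T u"
    and "A \<noteq> {}"
    and "\<forall>\<alpha>\<in>A. characteristic T u (X \<alpha>)"
  shows "((\<forall>t\<in>{0..T}. bdd_above ((\<lambda>\<alpha>. X \<alpha> t) ` A))
            \<longrightarrow> characteristic T u (\<lambda>t. SUP \<alpha>\<in>A. X \<alpha> t))
       \<and> ((\<forall>t\<in>{0..T}. bdd_below ((\<lambda>\<alpha>. X \<alpha> t) ` A))
            \<longrightarrow> characteristic T u (\<lambda>t. INF \<alpha>\<in>A. X \<alpha> t))"
proof -
  have cont: "continuous_on (UNIV \<times> {0..T}) (\<lambda>(x, t). u x t)"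
    using assms(3) unfolding HS_weak_solution_def by blast
  obtain M where M: "\<And>x t. t \<in> {0..T} \<Longrightarrow> \<bar>u x t\<bar> \<le> M"
    using assms(2) unfolding bounded_iff by fastforce
  have "characteristic T u (\<lambda>t. SUP \<alpha>\<in>A. X \<alpha> t)"
    if "\<forall>t\<in>{0..T}. bdd_above ((\<lambda>\<alpha>. X \<alpha> t) ` A)"
  proof -
    interpret characteristic_family T u M A X
      using assms that cont M by unfold_locales auto
    show ?thesis
      by (rule characteristic_SUP)
  qed
  moreover have "characteristic T u (\<lambda>t. INF \<alpha>\<in>A. X \<alpha> t)"
    if "\<forall>t\<in>{0..T}. bdd_below ((\<lambda>\<alpha>. X \<alpha> t) ` A)"
    by (rule characteristic_INF[OF _ cont M assms(4)]) (use assms that in auto)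
  ultimately show ?thesis
    by blast
qed

end
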